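(* Let $\mathbb{K}$ be a field, $m=4$, and for $p\in\mathbf{Z}^2$ let $\langle p\rangle=\{q\in\mathbf{Z}^2:p\le q\le(10,10)\}$. Let $\mathcal W=\bigcup_{k=0}^{4}\langle(8-2k,2k)\rangle$, $x_1=(7,1)$, $x_2=(5,3)$, $x_3=(3,5)$, $x_4=(1,7)$. Define $\mathcal I_1=\mathcal W\cup\langle x_1\rangle\cup\langle x_2\rangle\cup\langle x_3\rangle\cup\langle x_4\rangle$, $\mathcal I_2=\mathcal W\cup\langle x_1-(1,1)\rangle\cup\langle x_2\rangle\cup\langle x_4\rangle$, $\mathcal I_3=\mathcal W\cup\langle x_1\rangle\cup\langle x_2-(1,1)\rangle\cup\langle x_3\rangle$, $\mathcal J_1=\mathcal W\cup\langle x_1\rangle\cup\langle x_2\rangle\cup\langle x_3\rangle\cup\langle x_4\rangle$, $\mathcal J_2=\mathcal W\cup\langle x_1\rangle\cup\langle x_3-(1,1)\rangle\cup\langle x_4\rangle$, $\mathcal J_3=\mathcal W\cup\langle x_2\rangle\cup\langle x_3\rangle\cup\langle x_4-(1,1)\rangle$, and $M=\bigoplus_{i=1}^3I^{\mathcal I_i}$, $N=\bigoplus_{j=1}^3I^{\mathcal J_j}$ as functors $\mathbf{Z}^2\to\mathbf{Vec}_{\mathbb{K}}$. Then $d_I(M,N)=1$ and $d_B(\mathcal B(M),\mathcal B(N))=2$, where $\mathcal B(M)=\{\mathcal I_1,\mathcal I_2,\mathcal I_3\}$ and $\mathcal B(N)=\{\mathcal J_1,\mathcal J_2,\mathcal 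J_3\}$.
   Context: $\mathbf{Z}^2$ has the product order. $I^{\mathcal J}$ is the interval module ($\mathbb{K}$ on $\mathcal J$, $0$ elsewhere, identity maps between points of $\mathcal J$, zero otherwise). For $\delta\in\{0,1,\dots\}$: $M(\delta)_a=M_{a+(\delta,\delta)}$, $f(\delta)_a=f_{a+(\delta,\delta)}$; $\phi^{2\delta}_M:M\to M(2\delta)$ is given by internal maps; a $\delta$-interleaving is $f:M\to N(\delta)$, $g:N\to M(\delta)$ with $g(\delta)\circ f=\phi^{2\delta}_M$ and $f(\delta)\circ g=\phi^{2\delta}_N$; $d_I(M,N)$ is the least such $\delta$. Intervals are $\delta$-interleaved if their interval modules are; $\mathcal J$ is $2\delta$-trivial if $I^{\mathcal J}$ is $\delta$-interleaved with $0$; $\mathcal C_{2\delta}$ is the multiset of intervals in $\mathcal C$ that are not $2\delta$-trivial. A $\delta$-matching between barcodes $\mathcal C,\mathcal D$ is a partial bijection $\sigma$ whose domain contains $\mathcal C_{2\delta}$, image contains $\mathcal D_{2\delta}$, and with $\sigma(\mathcal J)=\mathcal K$ implying $\mathcal J,\mathcal K$ are $\delta$-interleaved; $d_B(\mathcal C,\mathcal D)$ is the least $\delta\in\{0,1,\dots\}$ admitting a $\delta$-matching. *)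

theory Defs
  imports Main "HOL-Library.Extended_Nat"
begin

type_synonym pt = "int \<times> int"

definition le2 :: "pt \<Rightarrow> pt \<Rightarrow> bool" where
  "le2 a b \<longleftrightarrow> fst a \<le> fst b \<and> snd a \<le> snd b"

definition shiftp :: "nat \<Rightarrow> pt \<Rightarrow> pt" where
  "shiftp d a = (fst a + int d, snd a + int d)"

text \<open>A vector is a coordinate function nat => K; each fibre M_a is a set of such
  vectors (a subspace), and mp M a b is the internal map M_a -> M_b for a <= b.
  All modules occurring below (finite direct sums of interval modules, the zero module,
  and their shifts) are of this form; morphisms between them are arbitrary linear maps.\<close>

record 'k pmod =
  sp :: "pt \<Rightarrow> (nat \<Rightarrow> 'k) set"
  mp :: "pt \<Rightarrow> pt \<Rightarrow> (nat \<Rightarrow> 'k) \<Rightarrow> (nat \<Rightarrow> 'k)"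

definition linear_between :: "(nat \<Rightarrow> 'k::field) set \<Rightarrow> (nat \<Rightarrow> 'k) set
    \<Rightarrow> ((nat \<Rightarrow> 'k) \<Rightarrow> (nat \<Rightarrow> 'k)) \<Rightarrow> bool" where
  "linear_between A B h \<longleftrightarrow>
     (\<forall>x\<in>A. h x \<in> B) \<and>
     (\<forall>x\<in>A. \<forall>y\<in>A. h (\<lambda>i. x i + y i) = (\<lambda>i. h x i + h y i)) \<and>
     (\<forall>c. \<forall>x\<in>A. h (\<lambda>i. c * x i) = (\<lambda>i. c * h x i))"

definition is_morph :: "'k::field pmod \<Rightarrow> 'k pmod \<Rightarrow> (pt \<Rightarrow> (nat \<Rightarrow> 'k) \<Rightarrow> (nat \<Rightarrow> 'k)) \<Rightarrow> bool" where
  "is_morph M N f \<longleftrightarrow>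
     (\<forall>a. linear_between (sp M a) (sp N a) (f a)) \<and>
     (\<forall>a b. le2 a b \<longrightarrow> (\<forall>x\<in>sp M a. f b (mp M a b x) = mp N a b (f a x)))"

definition shift_mod :: "nat \<Rightarrow> 'k pmod \<Rightarrow> 'k pmod" where
  "shift_mod d M = \<lparr> sp = (\<lambda>a. sp M (shiftp d a)),
                     mp = (\<lambda>a b. mp M (shiftp d a) (shiftp d b)) \<rparr>"

definition interleaved :: "nat \<Rightarrow> 'k::field pmod \<Rightarrow> 'k pmod \<Rightarrow> bool" where
  "interleaved d M N \<longleftrightarrow>
     (\<exists>f g. is_morph M (shift_mod d N) f \<and> is_morph N (shift_mod d M) g \<and>
        (\<forall>a. \<forall>x\<in>sp M a. g (shiftp d a) (f a x) = mp M a (shiftp (2*d) a) x) \<and>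
        (\<forall>a. \<forall>x\<in>sp N a. f (shiftp d a) (g a x) = mp N a (shiftp (2*d) a) x))"

definition dI :: "'k::field pmod \<Rightarrow> 'k pmod \<Rightarrow> enat" where
  "dI M N = (INF d\<in>{d. interleaved d M N}. enat d)"

text \<open>Direct sum of the interval modules I^{Js!0}, ..., I^{Js!(n-1)}: coordinate i carries
  the i-th summand.\<close>
definition dirsum_intervals :: "pt set list \<Rightarrow> 'k::field pmod" where
  "dirsum_intervals Js = \<lparr> sp = (\<lambda>a. {x. \<forall>i. x i \<noteq> 0 \<longrightarrow> i < length Js \<and> a \<in> Js ! i}),
               mp = (\<lambda>a b x. (\<lambda>i. if i < length Js \<and> a \<in> Js ! i \<and> b \<in> Js ! i then x i else 0)) \<rparr>"

definition interval_module :: "pt set \<Rightarrow> 'k::field pmod" where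
  "interval_module J = dirsum_intervals [J]"

definition zero_module :: "'k::field pmod" where
  "zero_module = \<lparr> sp = (\<lambda>a. {\<lambda>i. 0}), mp = (\<lambda>a b x. (\<lambda>i. 0)) \<rparr>"

definition intervals_interleaved :: "'k::field itself \<Rightarrow> nat \<Rightarrow> pt set \<Rightarrow> pt set \<Rightarrow> bool" where
  "intervals_interleaved _ d J K \<longleftrightarrow>
     interleaved d (interval_module J :: 'k pmod) (interval_module K)"

text \<open>J is 2 delta-trivial iff I^J is delta-interleaved with 0.\<close>
definition trivial2 :: "'k::field itself \<Rightarrow> nat \<Rightarrow> pt set \<Rightarrow> bool" where
  "trivial2 _ d J \<longleftrightarrow> interleaved d (interval_module J :: 'k pmod) zero_module"

text \<open>Barcodes are multisets of intervals, given as indexed lists; a partial bijection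
  between the multisets is a partial bijection R between index sets.\<close>
definition matching :: "'k::field itself \<Rightarrow> nat \<Rightarrow> pt set list \<Rightarrow> pt set list \<Rightarrow> bool" where
  "matching T d C D \<longleftrightarrow>
     (\<exists>R :: (nat \<times> nat) set.
        R \<subseteq> {..<length C} \<times> {..<length D} \<and>
        (\<forall>i j j'. (i, j) \<in> R \<longrightarrow> (i, j') \<in> R \<longrightarrow> j = j') \<and>
        (\<forall>i i' j. (i, j) \<in> R \<longrightarrow> (i', j) \<in> R \<longrightarrow> i = i') \<and>
        (\<forall>i<length C. \<not> trivial2 T d (C ! i) \<longrightarrow> i \<in> Domain R) \<and>
        (\<forall>j<length D. \<not> trivial2 T d (D ! j) \<longrightarrow> j \<in> Range R) \<and>
        (\<forall>(i, j)\<in>R. intervals_interleaved T d (C ! i) (D ! j)))"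

definition dB :: "'k::field itself \<Rightarrow> pt set list \<Rightarrow> pt set list \<Rightarrow> enat" where
  "dB T C D = (INF d\<in>{d. matching T d C D}. enat d)"

definition up :: "pt \<Rightarrow> pt set" where
  "up p = {q. le2 p q \<and> le2 q (10, 10)}"

definition W :: "pt set" where
  "W = (\<Union>k\<in>{0..4::int}. up (8 - 2*k, 2*k))"

definition x1 :: pt where "x1 = (7, 1)"
definition x2 :: pt where "x2 = (5, 3)"
definition x3 :: pt where "x3 = (3, 5)"
definition x4 :: pt where "x4 = (1, 7)"

definition dm :: "pt \<Rightarrow> pt" where "dm p = (fst p - 1, snd p - 1)"

definition I1 :: "pt set" where "I1 = W \<union> up x1 \<union> up x2 \<union> up x3 \<union> up x4"
definition I2 :: "pt set" where "I2 = W \<union> up (dm x1) \<union> up x2 \<union> up x4"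
definition I3 :: "pt set" where "I3 = W \<union> up x1 \<union> up (dm x2) \<union> up x3"
definition J1 :: "pt set" where "J1 = W \<union> up x1 \<union> up x2 \<union> up x3 \<union> up x4"
definition J2 :: "pt set" where "J2 = W \<union> up x1 \<union> up (dm x3) \<union> up x4"
definition J3 :: "pt set" where "J3 = W \<union> up x2 \<union> up x3 \<union> up (dm x4)"

end

theory Submission
  imports Defs
begin

text \<open>
  If \<open>a\<close> and \<open>a + (2\<delta>,2\<delta>)\<close> lie in a bar of \<open>M\<close> while \<open>a + (\<delta>,\<delta>)\<close> lies in no bar of \<open>N\<close>,
  then the nonzero internal map \<open>\<phi>\<^sup>2\<^sup>\<delta>\<close> would factor through \<open>N\<^sub>a\<^sub>+\<^sub>\<delta> = 0\<close>, so \<open>M\<close> and \<open>N\<close> are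
  not \<open>\<delta>\<close>-interleaved. This single obstruction rules out \<open>d\<^sub>I(M,N) = 0\<close> (at \<open>(6,0)\<close>), and at
  \<open>\<delta> = 1\<close> it forbids matching either of the non-trivial bars \<open>\<I>\<^sub>2\<close>, \<open>\<I>\<^sub>3\<close> with \<open>\<J>\<^sub>2\<close> or \<open>\<J>\<^sub>3\<close>,
  so both would have to be matched with \<open>\<J>\<^sub>1\<close>. Nevertheless \<open>M\<close> and \<open>N\<close> are 1-interleaved by
  morphisms that mix the summands: they are given by mutually inverse integer matrices, and a
  check over the grid \<open>[0,10]\<^sup>2\<close> shows that the summands killed at \<open>a + (1,1)\<close> never spoil
  invertibility where \<open>\<phi>\<^sup>2\<close> is nonzero. Bars are matched diagonally at \<open>\<delta> = 2\<close>.
\<close>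

section \<open>An obstruction to interleavings of direct sums of interval modules\<close>

lemma interleaved_sym: "interleaved d M N \<Longrightarrow> interleaved d N M"
  unfolding interleaved_def by blast

lemma linear_between_zero:
  assumes "linear_between A B h" "(\<lambda>_. 0) \<in> A"
  shows "h (\<lambda>_. 0) = (\<lambda>_. 0::'k::field)"
proof -
  have "\<forall>c. \<forall>x\<in>A. h (\<lambda>i. c * x i) = (\<lambda>i. c * h x i)"
    using assms(1) unfolding linear_between_def by blast
  from this[rule_format, OF assms(2), of 0] show ?thesis by simp
qed

lemma zero_in_sp_dirsum_intervals: "(\<lambda>_. 0) \<in> sp (dirsum_intervals Js) a"
  by (simp add: dirsum_intervals_def)

lemma sp_dirsum_intervals_outside_bars:
  assumes "\<forall>K\<in>set Ks. a \<notin> K" "x \<in> sp (dirsum_intervals Ks) a"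
  shows "x = (\<lambda>_. 0)"
  using assms by (auto simp: dirsum_intervals_def fun_eq_iff)

lemma zero_module_eq_dirsum_Nil: "(zero_module :: 'k::field pmod) = dirsum_intervals []"
  by (auto simp: zero_module_def dirsum_intervals_def fun_eq_iff)

lemma not_interleaved_dirsum_intervals:
  assumes i: "i < length Js" "a \<in> Js!i" "shiftp (2*d) a \<in> Js!i"
    and gap: "\<forall>K\<in>set Ks. shiftp d a \<notin> K"
  shows "\<not> interleaved d (dirsum_intervals Js :: 'k::field pmod) (dirsum_intervals Ks)"
    and "\<not> interleaved d (dirsum_intervals Ks :: 'k::field pmod) (dirsum_intervals Js)"
proof -
  show "\<not> interleaved d (dirsum_intervals Js :: 'k::field pmod) (dirsum_intervals Ks)"
  proof
    assume "interleaved d (dirsum_intervals Js :: 'k pmod) (dirsum_intervals Ks)"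
    then obtain f g where
      f: "is_morph (dirsum_intervals Js) (shift_mod d (dirsum_intervals Ks)) f" and
      g: "is_morph (dirsum_intervals Ks) (shift_mod d (dirsum_intervals Js)) g" and
      gf: "\<forall>x\<in>sp (dirsum_intervals Js) a. g (shiftp d a) (f a x) = mp (dirsum_intervals Js) a (shiftp (2*d) a) (x :: nat \<Rightarrow> 'k)"
      unfolding interleaved_def by blast
    define e :: "nat \<Rightarrow> 'k" where "e = (\<lambda>k. if k = i then 1 else 0)"
    have e: "e \<in> sp (dirsum_intervals Js) a"
      using i by (auto simp: e_def dirsum_intervals_def)
    have "linear_between (sp (dirsum_intervals Js) a) (sp (shift_mod d (dirsum_intervals Ks)) a) (f a)"
      using f unfolding is_morph_def by blast
    then have "f a e \<in> sp (dirsum_intervals Ks) (shiftp d a)"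
      using e unfolding linear_between_def shift_mod_def by simp
    then have "f a e = (\<lambda>_. 0)"
      by (rule sp_dirsum_intervals_outside_bars[OF gap])
    moreover have "g (shiftp d a) (\<lambda>_. 0) = (\<lambda>_. 0)"
      using g zero_in_sp_dirsum_intervals unfolding is_morph_def by (blast intro: linear_between_zero)
    ultimately have "mp (dirsum_intervals Js) a (shiftp (2*d) a) e = (\<lambda>_. 0)"
      using gf e by auto
    then have "mp (dirsum_intervals Js) a (shiftp (2*d) a) e i = 0"
      by simp
    then show False
      using i by (simp add: dirsum_intervals_def e_def)
  qed
  then show "\<not> interleaved d (dirsum_intervals Ks :: 'k::field pmod) (dirsum_intervals Js)"
    using interleaved_sym by blast
qed

section \<open>Morphisms between direct sums of interval modules given by integer matrices\<close>

definition matrix_morph :: "nat \<Rightarrow> pt set list \<Rightarrow> (nat \<Rightarrow> nat \<Rightarrow> int) \<Rightarrow> nat \<Rightarrow> pt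
    \<Rightarrow> (nat \<Rightarrow> 'k::field) \<Rightarrow> nat \<Rightarrow> 'k" where
  "matrix_morph n Ks F d a x =
     (\<lambda>j. if j < length Ks \<and> shiftp d a \<in> Ks!j then \<Sum>i<n. of_int (F j i) * x i else 0)"

lemma linear_between_matrix_morph:
  "linear_between A (sp (shift_mod d (dirsum_intervals Ks)) a)
     (matrix_morph n Ks F d a :: (nat \<Rightarrow> 'k::field) \<Rightarrow> _)"
  unfolding linear_between_def
  by (auto simp: matrix_morph_def shift_mod_def dirsum_intervals_def distrib_left sum.distrib
      sum_distrib_left mult.left_commute fun_eq_iff)

lemma matrix_morph_natural:
  assumes len: "length Js = n"
    \<comment> \<open>naturality of each nonzero component, at the pair \<open>a \<le> b\<close>\<close>
    and compat: "\<And>i j. i < n \<Longrightarrow> j < length Ks \<Longrightarrow> F j i \<noteq> 0 \<Longrightarrow> a \<in> Js!i \<Longrightarrow>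
        (shiftp d b \<in> Ks!j \<and> b \<in> Js!i \<longleftrightarrow> shiftp d a \<in> Ks!j \<and> shiftp d b \<in> Ks!j)"
    and x: "x \<in> sp (dirsum_intervals Js) a"
  shows "matrix_morph n Ks F d b (mp (dirsum_intervals Js) a b x) =
         mp (shift_mod d (dirsum_intervals Ks)) a b (matrix_morph n Ks F d a x :: nat \<Rightarrow> 'k::field)"
proof (rule ext)
  fix j
  have x0: "x i = 0" if "\<not> (i < n \<and> a \<in> Js!i)" for i
    using x that len by (auto simp: dirsum_intervals_def)
  show "matrix_morph n Ks F d b (mp (dirsum_intervals Js) a b x) j =
        mp (shift_mod d (dirsum_intervals Ks)) a b (matrix_morph n Ks F d a x) j"
  proof (cases "j < length Ks \<and> shiftp d b \<in> Ks!j")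
    case False
    then show ?thesis by (auto simp: matrix_morph_def shift_mod_def dirsum_intervals_def)
  next
    case True
    have summand: "of_int (F j i) * mp (dirsum_intervals Js) a b x i =
          (if shiftp d a \<in> Ks!j then of_int (F j i) * x i else 0)" if "i < n" for i
      using compat[OF that, of j] True x0[of i] len that
      by (cases "x i = 0 \<or> F j i = 0") (auto simp: dirsum_intervals_def)
    have "matrix_morph n Ks F d b (mp (dirsum_intervals Js) a b x) j =
          (\<Sum>i<n. of_int (F j i) * mp (dirsum_intervals Js) a b x i)"
      using True by (simp add: matrix_morph_def)
    also have "\<dots> = (\<Sum>i<n. if shiftp d a \<in> Ks!j then of_int (F j i) * x i else 0)"
      by (rule sum.cong[OF refl]) (rule summand, simp)
    also have "\<dots> = mp (shift_mod d (dirsum_intervals Ks)) a b (matrix_morph n Ks F d a x) j"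
      using True by (simp add: matrix_morph_def shift_mod_def dirsum_intervals_def)
    finally show ?thesis .
  qed
qed

lemma is_morph_matrix_morph:
  assumes "length Js = n"
    and "\<And>i j a b. i < n \<Longrightarrow> j < length Ks \<Longrightarrow> F j i \<noteq> 0 \<Longrightarrow> le2 a b \<Longrightarrow> a \<in> Js!i \<Longrightarrow>
        (shiftp d b \<in> Ks!j \<and> b \<in> Js!i \<longleftrightarrow> shiftp d a \<in> Ks!j \<and> shiftp d b \<in> Ks!j)"
  shows "is_morph (dirsum_intervals Js) (shift_mod d (dirsum_intervals Ks))
           (matrix_morph n Ks F d :: pt \<Rightarrow> (nat \<Rightarrow> 'k::field) \<Rightarrow> _)"
  unfolding is_morph_def
proof (intro conjI allI impI ballI linear_between_matrix_morph)
  fix a b and x :: "nat \<Rightarrow> 'k"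
  assume "le2 a b" "x \<in> sp (dirsum_intervals Js) a"
  then show "matrix_morph n Ks F d b (mp (dirsum_intervals Js) a b x) =
         mp (shift_mod d (dirsum_intervals Ks)) a b (matrix_morph n Ks F d a x)"
    using assms by (intro matrix_morph_natural) auto
qed

lemma shiftp_shiftp: "shiftp d (shiftp d a) = shiftp (2*d) a"
  by (simp add: shiftp_def)

lemma matrix_morph_comp_apply:
  assumes "length Ks = m"
  shows "matrix_morph m Js G d (shiftp d a) (matrix_morph n Ks F d a x) i' =
    (if i' < length Js \<and> shiftp (2*d) a \<in> Js!i'
     then \<Sum>i<n. of_int (\<Sum>j<m. G i' j * (if shiftp d a \<in> Ks!j then 1 else 0) * F j i) * x i
     else (0::'k::field))"
proof -
  have "(\<Sum>j<m. of_int (G i' j) * (if j < length Ks \<and> shiftp d a \<in> Ks!j then \<Sum>i<n. of_int (F j i) * x i else 0))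
      = (\<Sum>j<m. \<Sum>i<n. of_int (G i' j * (if shiftp d a \<in> Ks!j then 1 else 0) * F j i) * x i)"
    using assms by (intro sum.cong) (auto simp: sum_distrib_left mult.assoc)
  also have "\<dots> = (\<Sum>i<n. of_int (\<Sum>j<m. G i' j * (if shiftp d a \<in> Ks!j then 1 else 0) * F j i) * (x i::'k))"
    by (subst sum.swap) (simp add: sum_distrib_right)
  finally show ?thesis
    by (simp add: matrix_morph_def shiftp_shiftp)
qed

lemma matrix_morph_comp:
  assumes len: "length Js = n" "length Ks = m"
    and inverse: "\<And>i i'. i < n \<Longrightarrow> i' < n \<Longrightarrow> a \<in> Js!i \<Longrightarrow> shiftp (2*d) a \<in> Js!i' \<Longrightarrow>
      (\<Sum>j<m. G i' j * (if shiftp d a \<in> Ks!j then 1 else 0) * F j i) = (if i = i' then 1 else 0)"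
    and x: "x \<in> sp (dirsum_intervals Js) a"
  shows "matrix_morph m Js G d (shiftp d a) (matrix_morph n Ks F d a x) =
         mp (dirsum_intervals Js) a (shiftp (2*d) a) (x :: nat \<Rightarrow> 'k::field)"
proof (rule ext)
  fix i'
  have x0: "x i = 0" if "\<not> (i < n \<and> a \<in> Js!i)" for i
    using x that len by (auto simp: dirsum_intervals_def)
  show "matrix_morph m Js G d (shiftp d a) (matrix_morph n Ks F d a x) i' =
        mp (dirsum_intervals Js) a (shiftp (2*d) a) x i'"
  proof (cases "i' < n \<and> shiftp (2*d) a \<in> Js!i'")
    case False
    then show ?thesis
      using len x0 by (auto simp: matrix_morph_comp_apply dirsum_intervals_def)
  next
    case True
    have "of_int (\<Sum>j<m. G i' j * (if shiftp d a \<in> Ks!j then 1 else 0) * F j i) * x i =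
          (if i = i' then x i else 0)" if "i < n" for i
    proof (cases "x i = 0")
      case False
      then have "a \<in> Js!i"
        using x0 that by blast
      with True show ?thesis
        using inverse[OF that _ \<open>a \<in> Js!i\<close>] by simp
    qed auto
    then have "(\<Sum>i<n. of_int (\<Sum>j<m. G i' j * (if shiftp d a \<in> Ks!j then 1 else 0) * F j i) * x i)
               = x i'"
      using True by simp
    then show ?thesis
      using True len x0 by (auto simp: matrix_morph_comp_apply dirsum_intervals_def)
  qed
qed

section \<open>Bars that are up-sets of a box\<close>

text \<open>The bars of the example are unions of the truncated up-sets \<open>\<langle>p\<rangle>\<close>, i.e. up-sets of the
  box below the corner \<open>t\<close>; for such bars interleaving conditions become shifting conditions.\<close>

definition box_upset :: "pt \<Rightarrow> pt set \<Rightarrow> bool" where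
  "box_upset t A \<longleftrightarrow> (\<forall>a\<in>A. le2 a t) \<and> (\<forall>a\<in>A. \<forall>b. le2 a b \<longrightarrow> le2 b t \<longrightarrow> b \<in> A)"

definition shifts_into :: "pt \<Rightarrow> nat \<Rightarrow> pt set \<Rightarrow> pt set \<Rightarrow> bool" where
  "shifts_into t d A B \<longleftrightarrow> (\<forall>a\<in>A. le2 (shiftp d a) t \<longrightarrow> shiftp d a \<in> B)"

lemma le2_shiftp_mono: "le2 (shiftp d' a) t \<Longrightarrow> d \<le> d' \<Longrightarrow> le2 (shiftp d a) t"
  by (auto simp: le2_def shiftp_def)

lemma box_upset_Un: "box_upset t A \<Longrightarrow> box_upset t B \<Longrightarrow> box_upset t (A \<union> B)"
  unfolding box_upset_def by blast

lemma shifts_into_natural: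
  assumes A: "box_upset t A" and B: "box_upset t B" and AB: "shifts_into t d A B"
    and "le2 a b" "a \<in> A"
  shows "shiftp d b \<in> B \<and> b \<in> A \<longleftrightarrow> shiftp d a \<in> B \<and> shiftp d b \<in> B"
proof -
  have "le2 (shiftp d a) t" "le2 b t" if "shiftp d b \<in> B"
    using that B \<open>le2 a b\<close> by (auto simp: box_upset_def le2_def shiftp_def)
  then show ?thesis
    using A AB \<open>le2 a b\<close> \<open>a \<in> A\<close> unfolding box_upset_def shifts_into_def by blast
qed

lemma shifts_into_half_shift:
  assumes "box_upset t A" "shifts_into t d A B" "a \<in> A" "shiftp (2*d) a \<in> A"
  shows "shiftp d a \<in> B"
  using assms le2_shiftp_mono[of "2*d" a t d] unfolding box_upset_def shifts_into_def by auto

lemma interleaved_dirsum_by_matrices: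
  fixes F G :: "nat \<Rightarrow> nat \<Rightarrow> int"
  assumes len: "length Js = n" "length Ks = m"
    and bars: "\<forall>A \<in> set Js \<union> set Ks. box_upset t A"
    and F: "\<And>i j. i < n \<Longrightarrow> j < m \<Longrightarrow> F j i \<noteq> 0 \<Longrightarrow> shifts_into t d (Js!i) (Ks!j)"
    and G: "\<And>j i. j < m \<Longrightarrow> i < n \<Longrightarrow> G i j \<noteq> 0 \<Longrightarrow> shifts_into t d (Ks!j) (Js!i)"
    and GF: "\<And>a i i'. i < n \<Longrightarrow> i' < n \<Longrightarrow> a \<in> Js!i \<Longrightarrow> shiftp (2*d) a \<in> Js!i' \<Longrightarrow>
      (\<Sum>j<m. G i' j * (if shiftp d a \<in> Ks!j then 1 else 0) * F j i) = (if i = i' then 1 else 0)"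
    and FG: "\<And>a j j'. j < m \<Longrightarrow> j' < m \<Longrightarrow> a \<in> Ks!j \<Longrightarrow> shiftp (2*d) a \<in> Ks!j' \<Longrightarrow>
      (\<Sum>i<n. F j' i * (if shiftp d a \<in> Js!i then 1 else 0) * G i j) = (if j = j' then 1 else 0)"
  shows "interleaved d (dirsum_intervals Js :: 'k::field pmod) (dirsum_intervals Ks)"
proof -
  have "is_morph (dirsum_intervals Js) (shift_mod d (dirsum_intervals Ks))
          (matrix_morph n Ks F d :: pt \<Rightarrow> (nat \<Rightarrow> 'k) \<Rightarrow> _)"
    by (intro is_morph_matrix_morph shifts_into_natural) (use len bars F in auto)
  moreover have "is_morph (dirsum_intervals Ks) (shift_mod d (dirsum_intervals Js))
          (matrix_morph m Js G d :: pt \<Rightarrow> (nat \<Rightarrow> 'k) \<Rightarrow> _)"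
    by (intro is_morph_matrix_morph shifts_into_natural) (use len bars G in auto)
  moreover have "\<forall>a. \<forall>x\<in>sp (dirsum_intervals Js) a. matrix_morph m Js G d (shiftp d a) (matrix_morph n Ks F d a x)
                   = mp (dirsum_intervals Js) a (shiftp (2*d) a) (x :: nat \<Rightarrow> 'k)"
    by (auto intro: matrix_morph_comp[OF len GF])
  moreover have "\<forall>a. \<forall>x\<in>sp (dirsum_intervals Ks) a. matrix_morph n Ks F d (shiftp d a) (matrix_morph m Js G d a x)
                   = mp (dirsum_intervals Ks) a (shiftp (2*d) a) (x :: nat \<Rightarrow> 'k)"
    by (auto intro: matrix_morph_comp[OF len(2,1) FG])
  ultimately show ?thesis
    unfolding interleaved_def by blast
qed

lemma interleaved_interval_modules:
  assumes A: "box_upset t A" and B: "box_upset t B"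
    and "shifts_into t d A B" "shifts_into t d B A"
  shows "interleaved d (interval_module A :: 'k::field pmod) (interval_module B)"
  unfolding interval_module_def
proof (rule interleaved_dirsum_by_matrices[where F = "\<lambda>_ _. 1" and G = "\<lambda>_ _. 1" and t = t])
  show "\<forall>C \<in> set [A] \<union> set [B]. box_upset t C"
    using A B by simp
  fix a :: pt
  show "(\<Sum>j<1. 1 * (if shiftp d a \<in> [B]!j then 1 else 0) * 1) = (if i = i' then 1 else (0::int))"
    if "i < 1" "i' < 1" "a \<in> [A]!i" "shiftp (2*d) a \<in> [A]!i'" for i i'
    using that shifts_into_half_shift[OF A \<open>shifts_into t d A B\<close>] by simp
  show "(\<Sum>j<1. 1 * (if shiftp d a \<in> [A]!j then 1 else 0) * 1) = (if i = i' then 1 else (0::int))"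
    if "i < 1" "i' < 1" "a \<in> [B]!i" "shiftp (2*d) a \<in> [B]!i'" for i i'
    using that shifts_into_half_shift[OF B \<open>shifts_into t d B A\<close>] by simp
qed (use assms in simp_all)

lemma not_matching_if_unmatchable:
  assumes "i < length C" "\<not> trivial2 T d (C!i)"
    and "\<forall>j<length D. \<not> intervals_interleaved T d (C!i) (D!j)"
  shows "\<not> matching T d C D"
proof
  assume "matching T d C D"
  then obtain R where "R \<subseteq> {..<length C} \<times> {..<length D}"
    and "\<forall>i<length C. \<not> trivial2 T d (C ! i) \<longrightarrow> i \<in> Domain R"
    and "\<forall>(i, j)\<in>R. intervals_interleaved T d (C ! i) (D ! j)"
    unfolding matching_def by blast
  with assms show False by blast
qed

lemma not_matching_if_compete:
  assumes i: "i < length C" "\<not> trivial2 T d (C!i)"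
    and i': "i' < length C" "\<not> trivial2 T d (C!i')" and "i \<noteq> i'"
    and only_j: "\<And>k l. k \<in> {i, i'} \<Longrightarrow> l < length D \<Longrightarrow> intervals_interleaved T d (C!k) (D!l) \<Longrightarrow> l = j"
  shows "\<not> matching T d C D"
proof
  assume "matching T d C D"
  then obtain R where R: "R \<subseteq> {..<length C} \<times> {..<length D}"
    and inj: "\<forall>i i' j. (i, j) \<in> R \<longrightarrow> (i', j) \<in> R \<longrightarrow> i = i'"
    and dom: "\<forall>i<length C. \<not> trivial2 T d (C ! i) \<longrightarrow> i \<in> Domain R"
    and il: "\<forall>(i, j)\<in>R. intervals_interleaved T d (C ! i) (D ! j)"
    unfolding matching_def by blast
  have "(k, j) \<in> R" if "k \<in> {i, i'}" for k
  proof -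
    obtain l where "(k, l) \<in> R"
      using dom i i' \<open>k \<in> {i, i'}\<close> by blast
    moreover from this have "l = j"
      using R il only_j[OF \<open>k \<in> {i, i'}\<close>] by blast
    ultimately show ?thesis by simp
  qed
  then show False
    using inj \<open>i \<noteq> i'\<close> by blast
qed

lemma matching_diagonal:
  assumes "length C = length D" "\<And>i. i < length C \<Longrightarrow> intervals_interleaved T d (C!i) (D!i)"
  shows "matching T d C D"
  unfolding matching_def
  by (rule exI[of _ "{(i, i) | i. i < length C}"]) (use assms in \<open>auto intro!: DomainI RangeI\<close>)

lemma INF_enat_eq_least:
  assumes "P k" "\<And>d. d < k \<Longrightarrow> \<not> P d"
  shows "(INF d\<in>{d. P d}. enat d) = enat k"
proof (rule antisym)
  show "(INF d\<in>{d. P d}. enat d) \<le> enat k"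
    using assms(1) by (intro INF_lower) simp
  show "enat k \<le> (INF d\<in>{d. P d}. enat d)"
    using assms(2) by (intro INF_greatest) (auto simp: not_less[symmetric])
qed

lemma mem_up: "a \<in> up p \<longleftrightarrow> fst p \<le> fst a \<and> snd p \<le> snd a \<and> fst a \<le> 10 \<and> snd a \<le> 10"
  by (auto simp: up_def le2_def)

lemma W_eq: "W = up (8,0) \<union> up (6,2) \<union> up (4,4) \<union> up (2,6) \<union> up (0,8)"
proof -
  have "{0..4::int} = {0,1,2,3,4}" by auto
  then show ?thesis unfolding W_def by auto
qed

lemmas bar_simps = I1_def I2_def I3_def J1_def J2_def J3_def W_eq mem_up
  x1_def x2_def x3_def x4_def dm_def shiftp_def

lemma less_3_cases: "i < (3::nat) \<Longrightarrow> i = 0 \<or> i = 1 \<or> i = 2"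
  by auto

lemma box_upset_up: "box_upset (10,10) (up p)"
  by (auto simp: box_upset_def up_def le2_def)

lemma box_upset_bars: "i < 3 \<Longrightarrow> box_upset (10,10) ([I1,I2,I3]!i)" "i < 3 \<Longrightarrow> box_upset (10,10) ([J1,J2,J3]!i)"
  by (auto dest!: less_3_cases intro!: box_upset_Un box_upset_up
      simp: I1_def I2_def I3_def J1_def J2_def J3_def W_eq)

lemma bars_subset_square:
  "I1 \<subseteq> {0..10} \<times> {0..10}" "I2 \<subseteq> {0..10} \<times> {0..10}" "I3 \<subseteq> {0..10} \<times> {0..10}"
  "J1 \<subseteq> {0..10} \<times> {0..10}" "J2 \<subseteq> {0..10} \<times> {0..10}" "J3 \<subseteq> {0..10} \<times> {0..10}"
  by (auto simp: bar_simps)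

lemma grid10: "{0..10::int} = {0,1,2,3,4,5,6,7,8,9,10}"
  unfolding set_upto[symmetric] by (simp del: set_upto add: upto.simps)

lemma shifts_into_by_grid:
  assumes "A \<subseteq> {0..10} \<times> {0..10}"
    and "\<forall>x\<in>{0..10}. \<forall>y\<in>{0..10}. (x,y) \<in> A \<longrightarrow> le2 (shiftp d (x,y)) (10,10) \<longrightarrow> shiftp d (x,y) \<in> B"
  shows "shifts_into (10,10) d A B"
  using assms unfolding shifts_into_def by fastforce

lemma shifts_into_1:
  "shifts_into (10,10) 1 I1 J1" "shifts_into (10,10) 1 I1 J2" "shifts_into (10,10) 1 I1 J3"
  "shifts_into (10,10) 1 I2 J1" "shifts_into (10,10) 1 I2 J2"
  "shifts_into (10,10) 1 I3 J1" "shifts_into (10,10) 1 I3 J3"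
  "shifts_into (10,10) 1 J1 I1" "shifts_into (10,10) 1 J1 I2" "shifts_into (10,10) 1 J1 I3"
  "shifts_into (10,10) 1 J2 I1" "shifts_into (10,10) 1 J2 I3"
  "shifts_into (10,10) 1 J3 I1" "shifts_into (10,10) 1 J3 I2"
  by ((intro shifts_into_by_grid bars_subset_square; unfold grid10; simp add: bar_simps le2_def))+

lemma shifts_into_2:
  "shifts_into (10,10) 2 I1 J1" "shifts_into (10,10) 2 I2 J2" "shifts_into (10,10) 2 I3 J3"
  "shifts_into (10,10) 2 J1 I1" "shifts_into (10,10) 2 J2 I2" "shifts_into (10,10) 2 J3 I3"
  by ((intro shifts_into_by_grid bars_subset_square; unfold grid10; simp add: bar_simps le2_def))+

text \<open>\<open>Gmat\<close> is the inverse of \<open>Fmat\<close> over \<open>\<int>\<close>; the grid lemmas below check that dropping the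
  summands \<open>j\<close> with \<open>a + (1,1) \<notin> K\<^sub>j\<close> keeps the product the identity wherever \<open>\<phi>\<^sup>2\<close> is nonzero.\<close>

definition Fmat :: "nat \<Rightarrow> nat \<Rightarrow> int" where
  "Fmat j i = [[1,1,1],[1,1,0],[1,0,1]] ! j ! i"

definition Gmat :: "nat \<Rightarrow> nat \<Rightarrow> int" where
  "Gmat i j = [[-1,1,1],[1,0,-1],[1,-1,0]] ! i ! j"

lemma Fmat_support:
  "i < 3 \<Longrightarrow> j < 3 \<Longrightarrow> Fmat j i \<noteq> 0 \<Longrightarrow> shifts_into (10,10) 1 ([I1,I2,I3]!i) ([J1,J2,J3]!j)"
  by (auto dest!: less_3_cases simp: Fmat_def shifts_into_1[unfolded One_nat_def])

lemma Gmat_support: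
  "j < 3 \<Longrightarrow> i < 3 \<Longrightarrow> Gmat i j \<noteq> 0 \<Longrightarrow> shifts_into (10,10) 1 ([J1,J2,J3]!j) ([I1,I2,I3]!i)"
  by (auto dest!: less_3_cases simp: Gmat_def shifts_into_1[unfolded One_nat_def])

lemma all_less_3: "(\<forall>i<(3::nat). P i) \<longleftrightarrow> P 0 \<and> P 1 \<and> P 2"
  by (auto simp: numeral_3_eq_3 numeral_2_eq_2 less_Suc_eq)

lemma sum_less_3: "(\<Sum>j<(3::nat). f j) = f 0 + f 1 + f 2"
  by (simp add: numeral_3_eq_3 numeral_2_eq_2)

lemma Gmat_Fmat_grid:
  "\<forall>x\<in>{0..10}. \<forall>y\<in>{0..10}. \<forall>i<3. \<forall>i'<3. (x,y) \<in> [I1,I2,I3]!i \<longrightarrow> shiftp 2 (x,y) \<in> [I1,I2,I3]!i' \<longrightarrow>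
     (\<Sum>j<3. Gmat i' j * (if shiftp 1 (x,y) \<in> [J1,J2,J3]!j then 1 else 0) * Fmat j i) = (if i = i' then 1 else 0)"
  unfolding grid10 all_less_3 sum_less_3 by (simp add: bar_simps Fmat_def Gmat_def)

lemma Fmat_Gmat_grid:
  "\<forall>x\<in>{0..10}. \<forall>y\<in>{0..10}. \<forall>j<3. \<forall>j'<3. (x,y) \<in> [J1,J2,J3]!j \<longrightarrow> shiftp 2 (x,y) \<in> [J1,J2,J3]!j' \<longrightarrow>
     (\<Sum>i<3. Fmat j' i * (if shiftp 1 (x,y) \<in> [I1,I2,I3]!i then 1 else 0) * Gmat i j) = (if j = j' then 1 else 0)"
  unfolding grid10 all_less_3 sum_less_3 by (simp add: bar_simps Fmat_def Gmat_def)

lemma nth_bars_subset_square: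
  "i < 3 \<Longrightarrow> [I1,I2,I3]!i \<subseteq> {0..10} \<times> {0..10}" "i < 3 \<Longrightarrow> [J1,J2,J3]!i \<subseteq> {0..10} \<times> {0..10}"
  using bars_subset_square by (auto dest!: less_3_cases simp: subset_iff)

lemma interleaved_M_N_1:
  "interleaved 1 (dirsum_intervals [I1,I2,I3] :: 'k::field pmod) (dirsum_intervals [J1,J2,J3])"
proof (rule interleaved_dirsum_by_matrices[where F = Fmat and G = Gmat and t = "(10,10)"])
  show "\<forall>A \<in> set [I1,I2,I3] \<union> set [J1,J2,J3]. box_upset (10,10) A"
    using box_upset_bars[of 0] box_upset_bars[of 1] box_upset_bars[of 2] by simp
  fix a :: pt
  show "(\<Sum>j<3. Gmat i' j * (if shiftp 1 a \<in> [J1,J2,J3]!j then 1 else 0) * Fmat j i) = (if i = i' then 1 else 0)"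
    if "i < 3" "i' < 3" "a \<in> [I1,I2,I3]!i" "shiftp (2*1) a \<in> [I1,I2,I3]!i'" for i i'
    using that Gmat_Fmat_grid nth_bars_subset_square(1)[of i] by (cases a) auto
  show "(\<Sum>i<3. Fmat j' i * (if shiftp 1 a \<in> [I1,I2,I3]!i then 1 else 0) * Gmat i j) = (if j = j' then 1 else 0)"
    if "j < 3" "j' < 3" "a \<in> [J1,J2,J3]!j" "shiftp (2*1) a \<in> [J1,J2,J3]!j'" for j j'
    using that Fmat_Gmat_grid nth_bars_subset_square(2)[of j] by (cases a) auto
qed (simp_all add: Fmat_support Gmat_support flip: One_nat_def)

lemma not_interleaved_M_N_0:
  "\<not> interleaved 0 (dirsum_intervals [I1,I2,I3] :: 'k::field pmod) (dirsum_intervals [J1,J2,J3])"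
  by (rule not_interleaved_dirsum_intervals(1)[where i = 1 and a = "(6,0)"]) (simp_all add: bar_simps)

lemma not_trivial2_I2_I3:
  "\<not> trivial2 TYPE('k::field) 0 I2" "\<not> trivial2 TYPE('k) 1 I2" "\<not> trivial2 TYPE('k) 1 I3"
  unfolding trivial2_def interval_module_def zero_module_eq_dirsum_Nil
  by (rule not_interleaved_dirsum_intervals(1)[where i = 0 and a = "(4,4)"]; simp add: bar_simps)+

lemma not_intervals_interleaved_I2_0:
  "j < 3 \<Longrightarrow> \<not> intervals_interleaved TYPE('k::field) 0 I2 ([J1,J2,J3]!j)"
  unfolding intervals_interleaved_def interval_module_def
  by (rule not_interleaved_dirsum_intervals(1)[where i = 0 and a = "(6,0)"])
    (auto dest!: less_3_cases simp: bar_simps)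

lemma not_intervals_interleaved_1:
  "\<not> intervals_interleaved TYPE('k::field) 1 I2 J2" "\<not> intervals_interleaved TYPE('k) 1 I2 J3"
  "\<not> intervals_interleaved TYPE('k) 1 I3 J2" "\<not> intervals_interleaved TYPE('k) 1 I3 J3"
  unfolding intervals_interleaved_def interval_module_def
proof -
  show "\<not> interleaved 1 (dirsum_intervals [I2] :: 'k pmod) (dirsum_intervals [J2])"
    by (rule not_interleaved_dirsum_intervals(2)[where i = 0 and a = "(2,4)"]) (simp_all add: bar_simps)
  show "\<not> interleaved 1 (dirsum_intervals [I2] :: 'k pmod) (dirsum_intervals [J3])"
    by (rule not_interleaved_dirsum_intervals(1)[where i = 0 and a = "(6,0)"]) (simp_all add: bar_simps)
  show "\<not> interleaved 1 (dirsum_intervals [I3] :: 'k pmod) (dirsum_intervals [J2])"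
    by (rule not_interleaved_dirsum_intervals(1)[where i = 0 and a = "(4,2)"]) (simp_all add: bar_simps)
  show "\<not> interleaved 1 (dirsum_intervals [I3] :: 'k pmod) (dirsum_intervals [J3])"
    by (rule not_interleaved_dirsum_intervals(2)[where i = 0 and a = "(0,6)"]) (simp_all add: bar_simps)
qed

lemma matching_2: "matching TYPE('k::field) 2 [I1,I2,I3] [J1,J2,J3]"
proof (rule matching_diagonal)
  fix i assume "i < length [I1,I2,I3]"
  then have "i = 0 \<or> i = 1 \<or> i = 2"
    by auto
  then show "intervals_interleaved TYPE('k) 2 ([I1,I2,I3]!i) ([J1,J2,J3]!i)"
    unfolding intervals_interleaved_def
    using box_upset_bars[of i] by (elim disjE) (simp_all add: interleaved_interval_modules shifts_into_2)
qed simp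

lemma not_matching_0: "\<not> matching TYPE('k::field) 0 [I1,I2,I3] [J1,J2,J3]"
  by (rule not_matching_if_unmatchable[where i = 1])
    (simp_all add: not_trivial2_I2_I3 not_intervals_interleaved_I2_0)

lemma not_matching_1: "\<not> matching TYPE('k::field) 1 [I1,I2,I3] [J1,J2,J3]"
proof (rule not_matching_if_compete[where i = 1 and i' = 2 and j = 0])
  fix k l
  assume "k \<in> {1, 2}" "l < length [J1,J2,J3]"
    and "intervals_interleaved TYPE('k) 1 ([I1,I2,I3]!k) ([J1,J2,J3]!l)"
  moreover have "l = 0 \<or> l = 1 \<or> l = 2"
    using \<open>l < length [J1,J2,J3]\<close> by auto
  ultimately show "l = 0"
    using not_intervals_interleaved_1 by auto
qed (simp_all add: not_trivial2_I2_I3[unfolded One_nat_def])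

theorem mainTheorem8:
  fixes M N :: "'k::field pmod"
  assumes "M = dirsum_intervals [I1, I2, I3]"
      and "N = dirsum_intervals [J1, J2, J3]"
  shows "dI M N = 1 \<and> dB TYPE('k) [I1, I2, I3] [J1, J2, J3] = 2"
proof
  have "dI M N = enat 1"
    unfolding dI_def assms
    by (rule INF_enat_eq_least) (use interleaved_M_N_1 not_interleaved_M_N_0 in auto)
  then show "dI M N = 1"
    by (simp add: one_enat_def)
  have "dB TYPE('k) [I1, I2, I3] [J1, J2, J3] = enat 2"
    unfolding dB_def
  proof (rule INF_enat_eq_least)
    fix d :: nat
    assume "d < 2"
    then have "d = 0 \<or> d = 1"
      by auto
    then show "\<not> matching TYPE('k) d [I1, I2, I3] [J1, J2, J3]"
      using not_matching_0 not_matching_1 by auto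
  qed (rule matching_2)
  then show "dB TYPE('k) [I1, I2, I3] [J1, J2, J3] = 2"
    by (simp add: numeral_eq_enat)
qed

end
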